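(* For all constants $K_1,K_2,K_3,K_4>0$ there is a constant $K>0$ such that the following holds. Let $\varepsilon\in(0,1]$, let $A$ be a real $n\times n$ matrix, and let $q$ be a number with $K_1\varepsilon^{-2}\le q\le n$. Assume $\|A\|_C\le K_2\,\varepsilon n^2$, $\|A\|_F\le K_3\, n$, and $\max_{i,j}|A_{ij}|\le K_4\,\varepsilon^{-1}$. Let $Q$ be a random subset of $\{1,\dots,n\}$ in which each element is included independently with probability $q/n$. Then $$\mathbb E\,\|A|_{Q\times Q}\|_C\ \le\ K\,\varepsilon q^2.$$
   Context: The cut norm of a matrix $B=(B_{ij})$ is $\|B\|_C=\max_{I,J}\bigl|\sum_{i\in I,j\in J}B_{ij}\bigr|$, the maximum over all subsets $I$ of row indices and $J$ of column indices. $A|_{Q\times Q}=(A_{ij})_{i,j\in Q}$ is the principal submatrix on $Q$ (cut norm $0$ if $Q=\emptyset$). $\|A\|_F$ is the Frobenius norm. *)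

theory Defs
  imports "HOL-Probability.Probability"
begin

text \<open>Matrices are functions nat => nat => real; an n x n matrix uses indices in {..<n}.
  The cut norm of the principal submatrix on an index set S is the max over I, J subseteq S.\<close>

definition cut_norm :: "nat set \<Rightarrow> (nat \<Rightarrow> nat \<Rightarrow> real) \<Rightarrow> real" where
  "cut_norm S B = Max {\<bar>\<Sum>i\<in>I. \<Sum>j\<in>J. B i j\<bar> | I J. I \<subseteq> S \<and> J \<subseteq> S}"

definition frob_norm :: "nat \<Rightarrow> (nat \<Rightarrow> nat \<Rightarrow> real) \<Rightarrow> real" where
  "frob_norm n A = sqrt (\<Sum>i<n. \<Sum>j<n. (A i j)^2)"

definition random_subset :: "nat \<Rightarrow> real \<Rightarrow> nat set pmf" where
  "random_subset n p = map_pmf (\<lambda>f. {i. f i}) (Pi_pmf {..<n} False (\<lambda>_. bernoulli_pmf p))"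

end

theory Submission
  imports Defs
begin

text \<open>The cut norm of \<open>B\<close> is the larger of the maximal block sums of \<open>B\<close> and \<open>-B\<close>, so it
  suffices to bound the expected maximal block sum of \<open>A\<close> on \<open>Q \<times> Q\<close>.
  The diagonal is split off by decoupling: for a uniformly random \<open>L\<close>, the sum of \<open>A\<close> over
  \<open>I \<times> J\<close> is four times the expected sum over \<open>(I \<inter> L) \<times> (J - L)\<close> plus the diagonal entries
  indexed by \<open>I \<inter> J\<close>.
  On a block \<open>X \<times> Y\<close> with independent random \<open>X\<close> and \<open>Y\<close>, the best columns for given rows \<open>I\<close>
  are those with positive column sum, so the maximal block sum is a maximum over \<open>I\<close> of the sum
  over \<open>j \<in> Y\<close> of the positive parts of the column sums. Sampling \<open>Y\<close> costs a factor \<open>p\<close> plus a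
  fluctuation which, after symmetrization with an independent copy \<open>Y'\<close> and the contraction
  principle (removing the 1-Lipschitz positive part), is bounded row by row by the expected
  \<open>\<bar>\<Sum>j\<in>Y. A i j - (\<Sum>j\<in>Y'. A i j)\<bar>\<close>, at most \<open>sqrt (2 p)\<close> times the norm of row \<open>i\<close>.
  Sampling the columns and then the rows gives \<open>p\<^sup>2 \<parallel>A\<parallel>\<^sub>C + O(p sqrt (p n) \<parallel>A\<parallel>\<^sub>F)\<close>; with
  \<open>p = q / n\<close> the three terms of the final bound are of order \<open>\<epsilon> q\<^sup>2\<close>, \<open>q sqrt q\<close> and \<open>q / \<epsilon>\<close>,
  and \<open>q \<ge> K\<^sub>1 / \<epsilon>\<^sup>2\<close> makes the last two \<open>O(\<epsilon> q\<^sup>2)\<close>.\<close>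

section \<open>Expectation over a random subset\<close>

text \<open>The expectation of \<open>f Y\<close> for a random \<open>Y \<subseteq> S\<close> containing each element independently with
  probability \<open>p\<close>, as a finite sum so that \<open>S\<close> can be peeled off one element at a time.\<close>

definition subset_expect :: "'a set \<Rightarrow> real \<Rightarrow> ('a set \<Rightarrow> real) \<Rightarrow> real" where
  "subset_expect S p f = (\<Sum>Y\<in>Pow S. p ^ card Y * (1 - p) ^ card (S - Y) * f Y)"

lemma subset_expect_empty [simp]: "subset_expect {} p f = f {}"
  by (simp add: subset_expect_def)

lemma subset_expect_insert:
  assumes "finite S" "x \<notin> S"
  shows "subset_expect (insert x S) p f
    = p * subset_expect S p (\<lambda>Y. f (insert x Y)) + (1 - p) * subset_expect S p f"
proof -
  let ?w = "\<lambda>Y. p ^ card Y * (1 - p) ^ card (insert x S - Y) * f Y"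
  have disj: "Pow S \<inter> insert x ` Pow S = {}" and inj: "inj_on (insert x) (Pow S)"
    using assms by (auto simp: inj_on_def)
  have "subset_expect (insert x S) p f = sum ?w (Pow S) + sum ?w (insert x ` Pow S)"
    unfolding subset_expect_def Pow_insert using disj assms(1) by (simp add: sum.union_disjoint)
  also have "sum ?w (insert x ` Pow S) = p * subset_expect S p (\<lambda>Y. f (insert x Y))"
    unfolding sum.reindex[OF inj] subset_expect_def sum_distrib_left
  proof (rule sum.cong[OF refl])
    fix Y assume "Y \<in> Pow S"
    then have "card (insert x Y) = Suc (card Y)" "insert x S - insert x Y = S - Y"
      using assms finite_subset[of Y S] by (auto simp: card_insert_if)
    then show "(?w \<circ> insert x) Y = p * (p ^ card Y * (1 - p) ^ card (S - Y) * f (insert x Y))"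
      by simp
  qed
  also have "sum ?w (Pow S) = (1 - p) * subset_expect S p f"
    unfolding subset_expect_def sum_distrib_left
  proof (rule sum.cong[OF refl])
    fix Y assume "Y \<in> Pow S"
    then have "card (insert x S - Y) = Suc (card (S - Y))"
      using assms by (subst insert_Diff_if) auto
    then show "?w Y = (1 - p) * (p ^ card Y * (1 - p) ^ card (S - Y) * f Y)" by simp
  qed
  finally show ?thesis by simp
qed

lemma subset_expect_cong:
  "(\<And>Y. Y \<subseteq> S \<Longrightarrow> f Y = g Y) \<Longrightarrow> subset_expect S p f = subset_expect S p g"
  unfolding subset_expect_def by (intro sum.cong) auto

lemma subset_expect_add:
  "subset_expect S p (\<lambda>Y. f Y + g Y) = subset_expect S p f + subset_expect S p g"
  unfolding subset_expect_def by (simp add: algebra_simps sum.distrib)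

lemma subset_expect_diff:
  "subset_expect S p (\<lambda>Y. f Y - g Y) = subset_expect S p f - subset_expect S p g"
  unfolding subset_expect_def by (simp add: algebra_simps sum_subtractf)

lemma subset_expect_cmult: "subset_expect S p (\<lambda>Y. c * f Y) = c * subset_expect S p f"
  unfolding subset_expect_def by (simp add: algebra_simps sum_distrib_left)

lemma subset_expect_sum:
  "finite I \<Longrightarrow> subset_expect S p (\<lambda>Y. \<Sum>i\<in>I. f i Y) = (\<Sum>i\<in>I. subset_expect S p (f i))"
  by (induction I rule: finite_induct) (simp_all add: subset_expect_add subset_expect_def)

lemma subset_expect_mono:
  assumes "0 \<le> p" "p \<le> 1" "\<And>Y. Y \<subseteq> S \<Longrightarrow> f Y \<le> g Y"
  shows "subset_expect S p f \<le> subset_expect S p g"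
  unfolding subset_expect_def using assms by (intro sum_mono mult_left_mono) auto

lemma subset_expect_const: "finite S \<Longrightarrow> subset_expect S p (\<lambda>_. c) = c"
  by (induction S rule: finite_induct) (simp_all add: subset_expect_insert algebra_simps)

lemma subset_expect_swap:
  "subset_expect S p (\<lambda>Y. subset_expect T r (f Y))
    = subset_expect T r (\<lambda>Z. subset_expect S p (\<lambda>Y. f Y Z))"
  unfolding subset_expect_def sum_distrib_left by (subst sum.swap) (simp add: algebra_simps)

lemma subset_expect_indicator:
  assumes "finite S" "i \<in> S"
  shows "subset_expect S p (\<lambda>Y. of_bool (i \<in> Y)) = p"
proof -
  have S: "S = insert i (S - {i})" using assms by auto
  have "subset_expect S p (\<lambda>Y. of_bool (i \<in> Y))
      = p * subset_expect (S - {i}) p (\<lambda>_. 1) + (1 - p) * subset_expect (S - {i}) p (\<lambda>_. 0)"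
    by (subst S, subst subset_expect_insert) (auto intro!: subset_expect_cong simp: assms)
  then show ?thesis using assms by (simp add: subset_expect_const)
qed

lemma subset_expect_indicator_diff:
  assumes "finite S" "i \<in> S" "j \<in> S" "i \<noteq> j"
  shows "subset_expect S p (\<lambda>Y. of_bool (i \<in> Y \<and> j \<notin> Y)) = p * (1 - p)"
proof -
  have S: "S = insert i (S - {i})" using assms by auto
  have "subset_expect S p (\<lambda>Y. of_bool (i \<in> Y \<and> j \<notin> Y))
      = p * subset_expect (S - {i}) p (\<lambda>Y. of_bool (j \<notin> Y))
        + (1 - p) * subset_expect (S - {i}) p (\<lambda>Y. of_bool (i \<in> Y \<and> j \<notin> Y))"
    by (subst S, subst subset_expect_insert) (use assms in auto)
  also have "subset_expect (S - {i}) p (\<lambda>Y. of_bool (i \<in> Y \<and> j \<notin> Y)) = subset_expect (S - {i}) p (\<lambda>_. 0)"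
    by (rule subset_expect_cong) auto
  also have "subset_expect (S - {i}) p (\<lambda>Y. of_bool (j \<notin> Y))
      = subset_expect (S - {i}) p (\<lambda>Y. 1 - of_bool (j \<in> Y))"
    by (rule subset_expect_cong) auto
  finally show ?thesis
    using assms by (simp add: subset_expect_const subset_expect_diff subset_expect_indicator)
qed

lemma subset_expect_sum_elements:
  assumes "finite S"
  shows "subset_expect S p (\<lambda>Y. \<Sum>j\<in>Y. c j) = p * (\<Sum>j\<in>S. c j)"
proof -
  have "subset_expect S p (\<lambda>Y. \<Sum>j\<in>Y. c j) = subset_expect S p (\<lambda>Y. \<Sum>j\<in>S. c j * of_bool (j \<in> Y))"
    using assms by (intro subset_expect_cong)
      (simp add: sum.inter_restrict[symmetric] Int_absorb1 flip: of_bool_def)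
  also have "\<dots> = (\<Sum>j\<in>S. c j * p)"
    using assms by (simp only: subset_expect_sum subset_expect_cmult)
      (auto intro!: sum.cong simp: subset_expect_indicator)
  finally show ?thesis by (simp add: sum_distrib_left mult.commute)
qed

lemma power2_subset_expect_le:
  assumes "finite S" "0 \<le> p" "p \<le> 1"
  shows "(subset_expect S p f)\<^sup>2 \<le> subset_expect S p (\<lambda>Y. (f Y)\<^sup>2)"
  using assms(1)
proof (induction S arbitrary: f rule: finite_induct)
  case (insert x S)
  let ?a = "subset_expect S p (\<lambda>Y. f (insert x Y))" and ?b = "subset_expect S p f"
  have "(p * ?a + (1 - p) * ?b)\<^sup>2 = p * ?a\<^sup>2 + (1 - p) * ?b\<^sup>2 - p * (1 - p) * (?a - ?b)\<^sup>2"
    by (simp add: power2_eq_square algebra_simps)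
  also have "\<dots> \<le> p * ?a\<^sup>2 + (1 - p) * ?b\<^sup>2"
    using assms by simp
  also have "\<dots> \<le> p * subset_expect S p (\<lambda>Y. (f (insert x Y))\<^sup>2) + (1 - p) * subset_expect S p (\<lambda>Y. (f Y)\<^sup>2)"
    using insert.IH[of "\<lambda>Y. f (insert x Y)"] insert.IH[of f] assms
    by (intro add_mono mult_left_mono) auto
  finally show ?case using insert by (simp add: subset_expect_insert)
qed simp

lemma expectation_random_subset:
  assumes "0 \<le> p" "p \<le> 1"
  shows "measure_pmf.expectation (random_subset n p) f = subset_expect {..<n} p f"
proof -
  let ?N = "{..<n}"
  let ?P = "Pi_pmf ?N False (\<lambda>_. bernoulli_pmf p)"
  have "set_pmf (random_subset n p) \<subseteq> Pow ?N"
    unfolding random_subset_def using set_Pi_pmf_subset[of ?N False] by auto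
  then have "measure_pmf.expectation (random_subset n p) f
      = (\<Sum>Y\<in>Pow ?N. pmf (random_subset n p) Y *\<^sub>R f Y)"
    by (intro integral_measure_pmf) auto
  also have "\<dots> = subset_expect ?N p f"
    unfolding subset_expect_def
  proof (rule sum.cong[OF refl])
    fix Y assume Y: "Y \<in> Pow ?N"
    have inj: "inj (\<lambda>g :: nat \<Rightarrow> bool. {i. g i})"
      by (auto simp: inj_def)
    have "pmf (random_subset n p) Y = pmf ?P (\<lambda>i. i \<in> Y)"
      unfolding random_subset_def using pmf_map_inj'[OF inj, of ?P "\<lambda>i. i \<in> Y"] by simp
    also have "\<dots> = (\<Prod>x\<in>?N. if x \<in> Y then p else 1 - p)"
      using Y assms by (subst pmf_Pi) (auto intro!: prod.cong)
    also have "\<dots> = p ^ card Y * (1 - p) ^ card (?N - Y)"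
      using Y by (simp add: prod.If_cases Int_absorb1 Diff_eq)
    finally show "pmf (random_subset n p) Y *\<^sub>R f Y = p ^ card Y * (1 - p) ^ card (?N - Y) * f Y"
      by simp
  qed
  finally show ?thesis .
qed

definition subset_expect2 :: "'a set \<Rightarrow> real \<Rightarrow> ('a set \<Rightarrow> 'a set \<Rightarrow> real) \<Rightarrow> real" where
  "subset_expect2 S p F = subset_expect S p (\<lambda>Y. subset_expect S p (F Y))"

lemma subset_expect2_insert:
  assumes "finite S" "x \<notin> S"
  shows "subset_expect2 (insert x S) p F
    = p * p * subset_expect2 S p (\<lambda>Y Y'. F (insert x Y) (insert x Y'))
      + p * (1 - p) * subset_expect2 S p (\<lambda>Y Y'. F (insert x Y) Y')
      + (1 - p) * p * subset_expect2 S p (\<lambda>Y Y'. F Y (insert x Y'))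
      + (1 - p) * (1 - p) * subset_expect2 S p F"
  unfolding subset_expect2_def
  by (simp only: subset_expect_insert[OF assms] subset_expect_add subset_expect_cmult)
    (simp add: algebra_simps)

lemma subset_expect2_cong:
  "(\<And>Y Y'. Y \<subseteq> S \<Longrightarrow> Y' \<subseteq> S \<Longrightarrow> F Y Y' = G Y Y') \<Longrightarrow> subset_expect2 S p F = subset_expect2 S p G"
  unfolding subset_expect2_def by (intro subset_expect_cong) auto

lemma subset_expect2_mono:
  assumes "0 \<le> p" "p \<le> 1" "\<And>Y Y'. Y \<subseteq> S \<Longrightarrow> Y' \<subseteq> S \<Longrightarrow> F Y Y' \<le> G Y Y'"
  shows "subset_expect2 S p F \<le> subset_expect2 S p G"
  unfolding subset_expect2_def using assms by (intro subset_expect_mono) auto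

lemma subset_expect2_add:
  "subset_expect2 S p (\<lambda>Y Y'. F Y Y' + G Y Y') = subset_expect2 S p F + subset_expect2 S p G"
  unfolding subset_expect2_def by (simp add: subset_expect_add)

lemma subset_expect2_sum:
  "finite I \<Longrightarrow> subset_expect2 S p (\<lambda>Y Y'. \<Sum>i\<in>I. F i Y Y') = (\<Sum>i\<in>I. subset_expect2 S p (F i))"
  unfolding subset_expect2_def by (simp add: subset_expect_sum)

lemma subset_expect2_abs_le_sqrt:
  assumes "finite S" "0 \<le> p" "p \<le> 1"
  shows "subset_expect2 S p (\<lambda>Y Y'. \<bar>F Y Y'\<bar>) \<le> sqrt (subset_expect2 S p (\<lambda>Y Y'. (F Y Y')\<^sup>2))"
proof -
  have "(subset_expect2 S p (\<lambda>Y Y'. \<bar>F Y Y'\<bar>))\<^sup>2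
      \<le> subset_expect S p (\<lambda>Y. (subset_expect S p (\<lambda>Y'. \<bar>F Y Y'\<bar>))\<^sup>2)"
    unfolding subset_expect2_def by (rule power2_subset_expect_le[OF assms])
  also have "\<dots> \<le> subset_expect2 S p (\<lambda>Y Y'. \<bar>F Y Y'\<bar>\<^sup>2)"
    unfolding subset_expect2_def
    by (intro subset_expect_mono[OF assms(2,3)] power2_subset_expect_le[OF assms])
  finally show ?thesis by (simp add: real_le_rsqrt)
qed

lemma subset_expect2_square_sum_diff:
  assumes "finite S"
  shows "subset_expect2 S p (\<lambda>Y Y'. (a + (\<Sum>j\<in>Y. c j) - (\<Sum>j\<in>Y'. c j))\<^sup>2)
    = a\<^sup>2 + 2 * p * (1 - p) * (\<Sum>j\<in>S. (c j)\<^sup>2)"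
  using assms
proof (induction S arbitrary: a rule: finite_induct)
  case (insert x S)
  have sum_insert: "(\<Sum>j\<in>insert x Y. c j) = c x + (\<Sum>j\<in>Y. c j)" if "Y \<subseteq> S" for Y
    using insert that finite_subset by (subst sum.insert) blast+
  have shifted: "subset_expect2 S p (\<lambda>Y Y'. (a + (\<Sum>j\<in>insert x Y. c j) - (\<Sum>j\<in>insert x Y'. c j))\<^sup>2)
      = subset_expect2 S p (\<lambda>Y Y'. (a + (\<Sum>j\<in>Y. c j) - (\<Sum>j\<in>Y'. c j))\<^sup>2)"
    "subset_expect2 S p (\<lambda>Y Y'. (a + (\<Sum>j\<in>insert x Y. c j) - (\<Sum>j\<in>Y'. c j))\<^sup>2)
      = subset_expect2 S p (\<lambda>Y Y'. ((a + c x) + (\<Sum>j\<in>Y. c j) - (\<Sum>j\<in>Y'. c j))\<^sup>2)"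
    "subset_expect2 S p (\<lambda>Y Y'. (a + (\<Sum>j\<in>Y. c j) - (\<Sum>j\<in>insert x Y'. c j))\<^sup>2)
      = subset_expect2 S p (\<lambda>Y Y'. ((a - c x) + (\<Sum>j\<in>Y. c j) - (\<Sum>j\<in>Y'. c j))\<^sup>2)"
    by (intro subset_expect2_cong; simp add: sum_insert algebra_simps)+
  show ?case
    using insert(1,2) unfolding subset_expect2_insert[OF insert(1,2)] shifted insert.IH
    by (simp add: power2_eq_square algebra_simps)
qed (simp add: subset_expect2_def)

lemma subset_expect2_abs_sum_diff_le:
  assumes "finite S" "0 \<le> p" "p \<le> 1"
  shows "subset_expect2 S p (\<lambda>Y Y'. \<bar>(\<Sum>j\<in>Y. c j) - (\<Sum>j\<in>Y'. c j)\<bar>)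
    \<le> sqrt (2 * p) * sqrt (\<Sum>j\<in>S. (c j)\<^sup>2)"
proof -
  have "subset_expect2 S p (\<lambda>Y Y'. \<bar>(\<Sum>j\<in>Y. c j) - (\<Sum>j\<in>Y'. c j)\<bar>)
      \<le> sqrt (2 * p * (1 - p) * (\<Sum>j\<in>S. (c j)\<^sup>2))"
    using subset_expect2_abs_le_sqrt[OF assms, of "\<lambda>Y Y'. (\<Sum>j\<in>Y. c j) - (\<Sum>j\<in>Y'. c j)"]
      subset_expect2_square_sum_diff[OF assms(1), of p 0 c]
    by simp
  also have "\<dots> \<le> sqrt (2 * p * (\<Sum>j\<in>S. (c j)\<^sup>2))"
    using assms by (intro real_sqrt_le_mono mult_right_mono sum_nonneg) (auto simp: mult_left_le)
  finally show ?thesis by (simp add: real_sqrt_mult)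
qed

section \<open>Contraction principle\<close>

lemma Max_plus_Max_minus_le:
  fixes w \<alpha> \<beta> :: "'a \<Rightarrow> real"
  assumes "finite T" "T \<noteq> {}" "\<And>s t. s \<in> T \<Longrightarrow> t \<in> T \<Longrightarrow> \<bar>\<alpha> s - \<alpha> t\<bar> \<le> \<bar>\<beta> s - \<beta> t\<bar>"
  shows "Max ((\<lambda>t. w t + \<alpha> t) ` T) + Max ((\<lambda>t. w t - \<alpha> t) ` T)
    \<le> Max ((\<lambda>t. w t + \<beta> t) ` T) + Max ((\<lambda>t. w t - \<beta> t) ` T)"
proof -
  have "Max ((\<lambda>t. w t + \<alpha> t) ` T) \<in> (\<lambda>t. w t + \<alpha> t) ` T"
    "Max ((\<lambda>t. w t - \<alpha> t) ` T) \<in> (\<lambda>t. w t - \<alpha> t) ` T"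
    using assms by (simp_all add: Max_in)
  then obtain s t where s: "s \<in> T" "Max ((\<lambda>t. w t + \<alpha> t) ` T) = w s + \<alpha> s"
    and t: "t \<in> T" "Max ((\<lambda>t. w t - \<alpha> t) ` T) = w t - \<alpha> t"
    by (auto simp only: image_iff)
  have le_Max: "w r + \<beta> r \<le> Max ((\<lambda>t. w t + \<beta> t) ` T)" "w r - \<beta> r \<le> Max ((\<lambda>t. w t - \<beta> t) ` T)"
    if "r \<in> T" for r
    using assms that by auto
  have "\<alpha> s - \<alpha> t \<le> \<bar>\<beta> s - \<beta> t\<bar>"
    using assms(3)[OF s(1) t(1)] by linarith
  then consider "\<alpha> s - \<alpha> t \<le> \<beta> s - \<beta> t" | "\<alpha> s - \<alpha> t \<le> \<beta> t - \<beta> s"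
    by linarith
  then show ?thesis
  proof cases
    case 1
    then show ?thesis using s t le_Max(1)[OF s(1)] le_Max(2)[OF t(1)] by linarith
  next
    case 2
    then show ?thesis using s t le_Max(1)[OF t(1)] le_Max(2)[OF s(1)] by linarith
  qed
qed

definition sym_sum_max ::
    "'c set \<Rightarrow> ('a \<Rightarrow> 'c \<Rightarrow> real) \<Rightarrow> ('c \<Rightarrow> real) \<Rightarrow> 'a set \<Rightarrow> 'a set \<Rightarrow> real" where
  "sym_sum_max T a u Y Y' = Max ((\<lambda>t. u t + (\<Sum>j\<in>Y. a j t) - (\<Sum>j\<in>Y'. a j t)) ` T)"

lemma subset_expect2_sym_sum_max_insert:
  assumes "finite S" "x \<notin> S"
  shows "subset_expect2 (insert x S) p (sym_sum_max T c v)
    = (p * p + (1 - p) * (1 - p)) * subset_expect2 S p (sym_sum_max T c v)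
      + p * (1 - p) * (subset_expect2 S p (sym_sum_max T c (\<lambda>t. v t + c x t))
        + subset_expect2 S p (sym_sum_max T c (\<lambda>t. v t - c x t)))"
proof -
  have fin: "finite Y \<and> x \<notin> Y" if "Y \<subseteq> S" for Y
    using assms that finite_subset by blast
  have "subset_expect2 S p (\<lambda>Y Y'. sym_sum_max T c v (insert x Y) (insert x Y'))
        = subset_expect2 S p (sym_sum_max T c v)"
    "subset_expect2 S p (\<lambda>Y Y'. sym_sum_max T c v (insert x Y) Y')
        = subset_expect2 S p (sym_sum_max T c (\<lambda>t. v t + c x t))"
    "subset_expect2 S p (\<lambda>Y Y'. sym_sum_max T c v Y (insert x Y'))
        = subset_expect2 S p (sym_sum_max T c (\<lambda>t. v t - c x t))"
    by (auto intro!: subset_expect2_cong arg_cong[where f=Max] image_cong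
        simp: sym_sum_max_def fin algebra_simps)
  then show ?thesis
    unfolding subset_expect2_insert[OF assms] by (simp add: algebra_simps)
qed

text \<open>In the conditioning on one element \<open>x\<close> above, \<open>a x\<close> only enters
  through the two mixed cases, and there \<open>Max_plus_Max_minus_le\<close> replaces it by \<open>b x\<close>.\<close>

lemma subset_expect2_sym_sum_max_contraction:
  assumes "finite S" "finite T" "T \<noteq> {}" "0 \<le> p" "p \<le> 1"
    and contr: "\<And>j s t. j \<in> S \<Longrightarrow> s \<in> T \<Longrightarrow> t \<in> T \<Longrightarrow> \<bar>a j s - a j t\<bar> \<le> \<bar>b j s - b j t\<bar>"
  shows "subset_expect2 S p (sym_sum_max T a u) \<le> subset_expect2 S p (sym_sum_max T b u)"
  using assms(1) contr
proof (induction S arbitrary: u rule: finite_induct)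
  case (insert x S)
  let ?E = "\<lambda>c v. subset_expect2 S p (sym_sum_max T c v)"
  have IH: "?E a v \<le> ?E b v" for v
    using insert.IH insert.prems by auto
  have mixed: "?E b (\<lambda>t. u t + a x t) + ?E b (\<lambda>t. u t - a x t)
      \<le> ?E b (\<lambda>t. u t + b x t) + ?E b (\<lambda>t. u t - b x t)"
    unfolding subset_expect2_add[symmetric]
  proof (rule subset_expect2_mono[OF assms(4,5)])
    fix Y Y'
    let ?w = "\<lambda>t. u t + (\<Sum>j\<in>Y. b j t) - (\<Sum>j\<in>Y'. b j t)"
    have "Max ((\<lambda>t. ?w t + a x t) ` T) + Max ((\<lambda>t. ?w t - a x t) ` T)
        \<le> Max ((\<lambda>t. ?w t + b x t) ` T) + Max ((\<lambda>t. ?w t - b x t) ` T)"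
      by (rule Max_plus_Max_minus_le[OF assms(2,3)]) (use insert.prems in auto)
    then show "sym_sum_max T b (\<lambda>t. u t + a x t) Y Y' + sym_sum_max T b (\<lambda>t. u t - a x t) Y Y'
        \<le> sym_sum_max T b (\<lambda>t. u t + b x t) Y Y' + sym_sum_max T b (\<lambda>t. u t - b x t) Y Y'"
      unfolding sym_sum_max_def by (simp add: algebra_simps)
  qed
  have weights: "0 \<le> p * p + (1 - p) * (1 - p)" "0 \<le> p * (1 - p)"
    using assms(4,5) by auto
  have "subset_expect2 (insert x S) p (sym_sum_max T a u)
      = (p * p + (1 - p) * (1 - p)) * ?E a u
        + p * (1 - p) * (?E a (\<lambda>t. u t + a x t) + ?E a (\<lambda>t. u t - a x t))"
    by (rule subset_expect2_sym_sum_max_insert[OF insert(1,2)])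
  also have "\<dots> \<le> (p * p + (1 - p) * (1 - p)) * ?E b u
        + p * (1 - p) * (?E b (\<lambda>t. u t + a x t) + ?E b (\<lambda>t. u t - a x t))"
    using IH weights by (intro add_mono mult_left_mono) auto
  also have "\<dots> \<le> (p * p + (1 - p) * (1 - p)) * ?E b u
        + p * (1 - p) * (?E b (\<lambda>t. u t + b x t) + ?E b (\<lambda>t. u t - b x t))"
    by (rule add_mono[OF order_refl mult_left_mono[OF mixed weights(2)]])
  also have "\<dots> = subset_expect2 (insert x S) p (sym_sum_max T b u)"
    by (rule subset_expect2_sym_sum_max_insert[OF insert(1,2), symmetric])
  finally show ?case .
qed (simp add: subset_expect2_def sym_sum_max_def)

text \<open>Symmetrization: \<open>p * (\<Sum>j\<in>S. c j t)\<close> is the expectation of \<open>\<Sum>j\<in>Y'. c j t\<close> over an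
  independent copy \<open>Y'\<close>.\<close>

lemma subset_expect_Max_sum_le:
  assumes "finite S" "finite T" "T \<noteq> {}" "0 \<le> p" "p \<le> 1"
  shows "subset_expect S p (\<lambda>Y. Max ((\<lambda>t. \<Sum>j\<in>Y. c j t) ` T))
    \<le> p * Max ((\<lambda>t. \<Sum>j\<in>S. c j t) ` T) + subset_expect2 S p (sym_sum_max T c (\<lambda>_. 0))"
proof -
  let ?M = "Max ((\<lambda>t. \<Sum>j\<in>S. c j t) ` T)"
  have "(\<Sum>j\<in>Y. c j t) \<le> p * ?M + subset_expect S p (sym_sum_max T c (\<lambda>_. 0) Y)"
    if "Y \<subseteq> S" "t \<in> T" for Y t
  proof -
    have "(\<Sum>j\<in>Y. c j t) - p * (\<Sum>j\<in>S. c j t)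
        = subset_expect S p (\<lambda>Y'. (\<Sum>j\<in>Y. c j t) - (\<Sum>j\<in>Y'. c j t))"
      using assms by (simp add: subset_expect_diff subset_expect_const subset_expect_sum_elements)
    also have "\<dots> \<le> subset_expect S p (sym_sum_max T c (\<lambda>_. 0) Y)"
      using that assms by (intro subset_expect_mono) (auto simp: sym_sum_max_def intro!: Max_ge)
    finally show ?thesis
      using that assms mult_left_mono[of "\<Sum>j\<in>S. c j t" ?M p] by (auto intro!: Max_ge)
  qed
  then have "subset_expect S p (\<lambda>Y. Max ((\<lambda>t. \<Sum>j\<in>Y. c j t) ` T))
      \<le> subset_expect S p (\<lambda>Y. p * ?M + subset_expect S p (sym_sum_max T c (\<lambda>_. 0) Y))"
    using assms by (intro subset_expect_mono) (auto simp: Max_le_iff)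
  also have "\<dots> = p * ?M + subset_expect2 S p (sym_sum_max T c (\<lambda>_. 0))"
    unfolding subset_expect2_def using assms by (simp add: subset_expect_add subset_expect_const)
  finally show ?thesis .
qed

section \<open>Block sums and the cut norm\<close>

definition block_sum :: "('a \<Rightarrow> 'b \<Rightarrow> real) \<Rightarrow> 'a set \<Rightarrow> 'b set \<Rightarrow> real" where
  "block_sum A I J = (\<Sum>i\<in>I. \<Sum>j\<in>J. A i j)"

text \<open>The one-sided cut norm of the block \<open>X \<times> Y\<close>; the cut norm is recovered from those
  of \<open>A\<close> and \<open>-A\<close>.\<close>

definition max_block_sum :: "('a \<Rightarrow> 'b \<Rightarrow> real) \<Rightarrow> 'a set \<Rightarrow> 'b set \<Rightarrow> real" where
  "max_block_sum A X Y = Max ((\<lambda>(I, J). block_sum A I J) ` (Pow X \<times> Pow Y))"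

lemma block_sum_transpose: "block_sum (\<lambda>j i. A i j) J I = block_sum A I J"
  unfolding block_sum_def by (rule sum.swap)

lemma block_sum_uminus: "block_sum (\<lambda>i j. - A i j) I J = - block_sum A I J"
  by (simp add: block_sum_def sum_negf)

lemma max_block_sum_ge:
  "finite X \<Longrightarrow> finite Y \<Longrightarrow> I \<subseteq> X \<Longrightarrow> J \<subseteq> Y \<Longrightarrow> block_sum A I J \<le> max_block_sum A X Y"
  unfolding max_block_sum_def by (rule Max_ge) force+

lemma max_block_sum_le_iff:
  "finite X \<Longrightarrow> finite Y \<Longrightarrow>
    max_block_sum A X Y \<le> c \<longleftrightarrow> (\<forall>I\<subseteq>X. \<forall>J\<subseteq>Y. block_sum A I J \<le> c)"
  unfolding max_block_sum_def by (subst Max_le_iff) auto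

lemma max_block_sum_nonneg: "finite X \<Longrightarrow> finite Y \<Longrightarrow> 0 \<le> max_block_sum A X Y"
  using max_block_sum_ge[of X Y "{}" "{}" A] by (simp add: block_sum_def)

lemma max_block_sum_transpose:
  assumes "finite X" "finite Y"
  shows "max_block_sum (\<lambda>j i. A i j) Y X = max_block_sum A X Y"
proof (rule antisym)
  show "max_block_sum (\<lambda>j i. A i j) Y X \<le> max_block_sum A X Y"
    unfolding max_block_sum_le_iff[OF assms(2,1)] block_sum_transpose[of A]
    using assms by (auto intro: max_block_sum_ge)
  show "max_block_sum A X Y \<le> max_block_sum (\<lambda>j i. A i j) Y X"
    unfolding max_block_sum_le_iff[OF assms]
    using assms max_block_sum_ge[of Y X _ _ "\<lambda>j i. A i j"] by (auto simp: block_sum_transpose[of A])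
qed

text \<open>For fixed rows \<open>I\<close> the best columns are those with positive column sum.\<close>

lemma max_block_sum_eq_Max_pos_part:
  assumes "finite X" "finite Y"
  shows "max_block_sum A X Y = Max ((\<lambda>I. \<Sum>j\<in>Y. max 0 (\<Sum>i\<in>I. A i j)) ` Pow X)"
proof (rule antisym)
  show "max_block_sum A X Y \<le> Max ((\<lambda>I. \<Sum>j\<in>Y. max 0 (\<Sum>i\<in>I. A i j)) ` Pow X)"
    unfolding max_block_sum_le_iff[OF assms]
  proof (intro allI impI)
    fix I J assume IJ: "I \<subseteq> X" "J \<subseteq> Y"
    have "block_sum A I J = (\<Sum>j\<in>J. \<Sum>i\<in>I. A i j)"
      unfolding block_sum_def by (rule sum.swap)
    also have "\<dots> \<le> (\<Sum>j\<in>Y. max 0 (\<Sum>i\<in>I. A i j))"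
      using assms IJ by (intro order.trans[OF sum_mono sum_mono2]) auto
    also have "\<dots> \<le> Max ((\<lambda>I. \<Sum>j\<in>Y. max 0 (\<Sum>i\<in>I. A i j)) ` Pow X)"
      using assms IJ by (intro Max_ge) auto
    finally show "block_sum A I J \<le> Max ((\<lambda>I. \<Sum>j\<in>Y. max 0 (\<Sum>i\<in>I. A i j)) ` Pow X)" .
  qed
  show "Max ((\<lambda>I. \<Sum>j\<in>Y. max 0 (\<Sum>i\<in>I. A i j)) ` Pow X) \<le> max_block_sum A X Y"
  proof (subst Max_le_iff, use assms in auto)
    fix I assume I: "I \<subseteq> X"
    let ?J = "{j\<in>Y. 0 < (\<Sum>i\<in>I. A i j)}"
    have "(\<Sum>j\<in>Y. max 0 (\<Sum>i\<in>I. A i j)) = (\<Sum>j\<in>?J. \<Sum>i\<in>I. A i j)"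
      using assms by (auto simp: sum.inter_filter max_def intro!: sum.cong)
    also have "\<dots> = block_sum A I ?J"
      unfolding block_sum_def by (rule sum.swap[symmetric])
    also have "\<dots> \<le> max_block_sum A X Y"
      using assms I by (intro max_block_sum_ge) auto
    finally show "(\<Sum>j\<in>Y. max 0 (\<Sum>i\<in>I. A i j)) \<le> max_block_sum A X Y" .
  qed
qed

lemma cut_norm_eq_Max_block_sum:
  "cut_norm S A = Max ((\<lambda>(I, J). \<bar>block_sum A I J\<bar>) ` (Pow S \<times> Pow S))"
  unfolding cut_norm_def block_sum_def by (rule arg_cong[where f = Max]) auto

lemma cut_norm_ge:
  "finite S \<Longrightarrow> I \<subseteq> S \<Longrightarrow> J \<subseteq> S \<Longrightarrow> \<bar>block_sum A I J\<bar> \<le> cut_norm S A"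
  unfolding cut_norm_eq_Max_block_sum by (intro Max_ge) auto

lemma cut_norm_uminus: "cut_norm S (\<lambda>i j. - A i j) = cut_norm S A"
  by (simp add: cut_norm_eq_Max_block_sum block_sum_uminus)

lemma max_block_sum_le_cut_norm:
  assumes "finite S" "X \<subseteq> S" "Y \<subseteq> S"
  shows "max_block_sum A X Y \<le> cut_norm S A"
proof -
  have "block_sum A I J \<le> cut_norm S A" if "I \<subseteq> X" "J \<subseteq> Y" for I J
    using order_trans[OF abs_ge_self cut_norm_ge[of S I J A]] that assms by auto
  then show ?thesis
    using assms finite_subset by (subst max_block_sum_le_iff) auto
qed

lemma cut_norm_le_max_block_sum:
  assumes "finite S"
  shows "cut_norm S A \<le> max_block_sum A S S + max_block_sum (\<lambda>i j. - A i j) S S"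
  unfolding cut_norm_eq_Max_block_sum
proof (subst Max_le_iff, use assms in auto)
  fix I J assume "I \<subseteq> S" "J \<subseteq> S"
  then have "block_sum A I J \<le> max_block_sum A S S"
    "- block_sum A I J \<le> max_block_sum (\<lambda>i j. - A i j) S S"
    "0 \<le> max_block_sum A S S" "0 \<le> max_block_sum (\<lambda>i j. - A i j) S S"
    using assms max_block_sum_ge[of S S I J "\<lambda>i j. - A i j"]
    by (auto simp: block_sum_uminus intro: max_block_sum_ge max_block_sum_nonneg)
  then show "\<bar>block_sum A I J\<bar> \<le> max_block_sum A S S + max_block_sum (\<lambda>i j. - A i j) S S"
    by linarith
qed

lemma frob_norm_transpose: "frob_norm n (\<lambda>j i. A i j) = frob_norm n A"
  unfolding frob_norm_def by (subst sum.swap) (rule refl)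

lemma frob_norm_uminus: "frob_norm n (\<lambda>i j. - A i j) = frob_norm n A"
  by (simp add: frob_norm_def)

lemma sum_row_norms_le_frob_norm:
  fixes A :: "nat \<Rightarrow> nat \<Rightarrow> real"
  assumes "U \<subseteq> {..<n}" "V \<subseteq> {..<n}"
  shows "(\<Sum>i\<in>U. sqrt (\<Sum>j\<in>V. (A i j)\<^sup>2)) \<le> sqrt (real n) * frob_norm n A"
proof -
  have nonneg: "0 \<le> (\<Sum>i<n. \<Sum>j<n. (A i j)\<^sup>2)"
    by (intro sum_nonneg) auto
  have "(\<Sum>i\<in>U. sqrt (\<Sum>j\<in>V. (A i j)\<^sup>2))\<^sup>2 \<le> (\<Sum>i\<in>U. (sqrt (\<Sum>j\<in>V. (A i j)\<^sup>2))\<^sup>2) * card U"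
    by (rule sum_squared_le_sum_of_squares)
  also have "\<dots> = (\<Sum>i\<in>U. \<Sum>j\<in>V. (A i j)\<^sup>2) * card U"
    by (simp add: sum_nonneg)
  also have "\<dots> \<le> (\<Sum>i<n. \<Sum>j<n. (A i j)\<^sup>2) * n"
  proof (rule mult_mono)
    show "(\<Sum>i\<in>U. \<Sum>j\<in>V. (A i j)\<^sup>2) \<le> (\<Sum>i<n. \<Sum>j<n. (A i j)\<^sup>2)"
      using assms by (intro order.trans[OF sum_mono[OF sum_mono2] sum_mono2]) (auto intro: sum_nonneg)
    show "real (card U) \<le> real n"
      using card_mono[OF _ assms(1)] by simp
  qed (use nonneg in auto)
  also have "\<dots> = (sqrt (real n) * frob_norm n A)\<^sup>2"
    using nonneg by (simp add: frob_norm_def power_mult_distrib)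
  finally show ?thesis
    by (rule power2_le_imp_le) (use nonneg in \<open>simp add: frob_norm_def\<close>)
qed

section \<open>Sampling the rows and columns of a block\<close>

lemma sym_sum_max_block_le:
  fixes B :: "'a \<Rightarrow> 'b \<Rightarrow> real"
  assumes "finite W"
  shows "sym_sum_max (Pow W) (\<lambda>j I. \<Sum>i\<in>I. B i j) (\<lambda>_. 0) Y Y'
    \<le> (\<Sum>i\<in>W. \<bar>(\<Sum>j\<in>Y. B i j) - (\<Sum>j\<in>Y'. B i j)\<bar>)"
  unfolding sym_sum_max_def
proof (subst Max_le_iff, use assms in auto)
  fix I assume I: "I \<subseteq> W"
  have "(\<Sum>j\<in>Y. \<Sum>i\<in>I. B i j) - (\<Sum>j\<in>Y'. \<Sum>i\<in>I. B i j)
      = (\<Sum>i\<in>I. (\<Sum>j\<in>Y. B i j) - (\<Sum>j\<in>Y'. B i j))"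
    by (simp add: sum.swap[of _ Y] sum.swap[of _ Y'] sum_subtractf)
  also have "\<dots> \<le> (\<Sum>i\<in>W. \<bar>(\<Sum>j\<in>Y. B i j) - (\<Sum>j\<in>Y'. B i j)\<bar>)"
    using I assms by (intro order.trans[OF sum_mono sum_mono2]) auto
  finally show "(\<Sum>j\<in>Y. \<Sum>i\<in>I. B i j) - (\<Sum>j\<in>Y'. \<Sum>i\<in>I. B i j)
      \<le> (\<Sum>i\<in>W. \<bar>(\<Sum>j\<in>Y. B i j) - (\<Sum>j\<in>Y'. B i j)\<bar>)" .
qed

lemma subset_expect2_sym_sum_max_pos_part_le:
  fixes B :: "'a \<Rightarrow> 'b \<Rightarrow> real"
  assumes "finite U" "finite W" "0 \<le> p" "p \<le> 1"
  shows "subset_expect2 U p (sym_sum_max (Pow W) (\<lambda>j I. max 0 (\<Sum>i\<in>I. B i j)) (\<lambda>_. 0))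
    \<le> sqrt (2 * p) * (\<Sum>i\<in>W. sqrt (\<Sum>j\<in>U. (B i j)\<^sup>2))"
proof -
  have "subset_expect2 U p (sym_sum_max (Pow W) (\<lambda>j I. max 0 (\<Sum>i\<in>I. B i j)) (\<lambda>_. 0))
      \<le> subset_expect2 U p (sym_sum_max (Pow W) (\<lambda>j I. \<Sum>i\<in>I. B i j) (\<lambda>_. 0))"
    using assms by (intro subset_expect2_sym_sum_max_contraction) (auto simp: max_def abs_if)
  also have "\<dots> \<le> subset_expect2 U p (\<lambda>Y Y'. \<Sum>i\<in>W. \<bar>(\<Sum>j\<in>Y. B i j) - (\<Sum>j\<in>Y'. B i j)\<bar>)"
    using assms by (intro subset_expect2_mono sym_sum_max_block_le)
  also have "\<dots> = (\<Sum>i\<in>W. subset_expect2 U p (\<lambda>Y Y'. \<bar>(\<Sum>j\<in>Y. B i j) - (\<Sum>j\<in>Y'. B i j)\<bar>))"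
    using assms by (simp add: subset_expect2_sum)
  also have "\<dots> \<le> (\<Sum>i\<in>W. sqrt (2 * p) * sqrt (\<Sum>j\<in>U. (B i j)\<^sup>2))"
    using assms by (intro sum_mono subset_expect2_abs_sum_diff_le)
  finally show ?thesis by (simp add: sum_distrib_left)
qed

lemma subset_expect_max_block_sum_right:
  fixes B :: "'a \<Rightarrow> 'b \<Rightarrow> real"
  assumes "finite W" "finite U" "0 \<le> p" "p \<le> 1"
  shows "subset_expect U p (max_block_sum B W)
    \<le> p * max_block_sum B W U + sqrt (2 * p) * (\<Sum>i\<in>W. sqrt (\<Sum>j\<in>U. (B i j)\<^sup>2))"
proof -
  let ?c = "\<lambda>j I. max 0 (\<Sum>i\<in>I. B i j)"
  have "subset_expect U p (max_block_sum B W)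
      = subset_expect U p (\<lambda>Y. Max ((\<lambda>I. \<Sum>j\<in>Y. ?c j I) ` Pow W))"
    using assms finite_subset by (intro subset_expect_cong max_block_sum_eq_Max_pos_part)
  also have "\<dots> \<le> p * Max ((\<lambda>I. \<Sum>j\<in>U. ?c j I) ` Pow W)
      + subset_expect2 U p (sym_sum_max (Pow W) ?c (\<lambda>_. 0))"
    using assms by (intro subset_expect_Max_sum_le) auto
  also have "\<dots> \<le> p * max_block_sum B W U + sqrt (2 * p) * (\<Sum>i\<in>W. sqrt (\<Sum>j\<in>U. (B i j)\<^sup>2))"
    using assms by (simp add: max_block_sum_eq_Max_pos_part subset_expect2_sym_sum_max_pos_part_le)
  finally show ?thesis .
qed

lemma subset_expect_max_block_sum_bipartite:
  fixes A :: "'a \<Rightarrow> 'b \<Rightarrow> real"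
  assumes "finite L" "finite R" "0 \<le> p" "p \<le> 1"
  shows "subset_expect L p (\<lambda>X. subset_expect R p (max_block_sum A X))
    \<le> p\<^sup>2 * max_block_sum A L R
      + p * sqrt (2 * p) * ((\<Sum>j\<in>R. sqrt (\<Sum>i\<in>L. (A i j)\<^sup>2)) + (\<Sum>i\<in>L. sqrt (\<Sum>j\<in>R. (A i j)\<^sup>2)))"
proof -
  let ?row = "\<lambda>i. sqrt (\<Sum>j\<in>R. (A i j)\<^sup>2)" and ?col = "\<lambda>j. sqrt (\<Sum>i\<in>L. (A i j)\<^sup>2)"
  have transpose: "subset_expect L p (\<lambda>X. max_block_sum A X R)
      = subset_expect L p (max_block_sum (\<lambda>j i. A i j) R)"
    using assms finite_subset by (intro subset_expect_cong max_block_sum_transpose[symmetric]) auto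
  have outer: "subset_expect L p (\<lambda>X. max_block_sum A X R)
      \<le> p * max_block_sum A L R + sqrt (2 * p) * (\<Sum>j\<in>R. ?col j)"
    using subset_expect_max_block_sum_right[OF assms(2,1,3,4), of "\<lambda>j i. A i j"]
    unfolding transpose max_block_sum_transpose[OF assms(1,2)] .
  have "subset_expect L p (\<lambda>X. subset_expect R p (max_block_sum A X))
      \<le> subset_expect L p (\<lambda>X. p * max_block_sum A X R + sqrt (2 * p) * (\<Sum>i\<in>X. ?row i))"
    using assms finite_subset by (intro subset_expect_mono subset_expect_max_block_sum_right) auto
  also have "\<dots> = p * subset_expect L p (\<lambda>X. max_block_sum A X R) + sqrt (2 * p) * (p * (\<Sum>i\<in>L. ?row i))"
    using assms by (simp add: subset_expect_add subset_expect_cmult subset_expect_sum_elements)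
  also have "\<dots> \<le> p * (p * max_block_sum A L R + sqrt (2 * p) * (\<Sum>j\<in>R. ?col j))
      + sqrt (2 * p) * (p * (\<Sum>i\<in>L. ?row i))"
    using outer assms(3) by (intro add_mono mult_left_mono) auto
  finally show ?thesis by (simp add: power2_eq_square algebra_simps)
qed

section \<open>Decoupling the diagonal\<close>

lemma subset_expect_split:
  assumes "finite S"
  shows "subset_expect S p (\<lambda>Q. g (Q \<inter> L) (Q - L))
    = subset_expect (S \<inter> L) p (\<lambda>X. subset_expect (S - L) p (g X))"
  using assms
proof (induction S arbitrary: g rule: finite_induct)
  case (insert x S)
  show ?case
  proof (cases "x \<in> L")
    case True
    then have "insert x S \<inter> L = insert x (S \<inter> L)" "insert x S - L = S - L"
      "\<And>Q. insert x Q \<inter> L = insert x (Q \<inter> L)" "\<And>Q. insert x Q - L = Q - L"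
      by auto
    with insert show ?thesis
      by (simp add: subset_expect_insert insert.IH[of "\<lambda>X. g (insert x X)"])
  next
    case False
    then have "insert x S \<inter> L = S \<inter> L" "insert x S - L = insert x (S - L)"
      "\<And>Q. insert x Q \<inter> L = Q \<inter> L" "\<And>Q. insert x Q - L = insert x (Q - L)"
      by auto
    with insert show ?thesis
      by (simp add: subset_expect_insert insert.IH[of "\<lambda>X Y. g X (insert x Y)"]
          subset_expect_add subset_expect_cmult)
  qed
qed simp

text \<open>A uniformly random \<open>L\<close> puts \<open>i \<in> L\<close> and \<open>j \<notin> L\<close> with probability \<open>1/4\<close>
  when \<open>i \<noteq> j\<close>, and never when \<open>i = j\<close>.\<close>

lemma subset_expect_half_block_sum:
  assumes "finite N" "I \<subseteq> N" "J \<subseteq> N"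
  shows "subset_expect N (1/2) (\<lambda>L. block_sum A (I \<inter> L) (J - L))
    = (block_sum A I J - (\<Sum>i\<in>I \<inter> J. A i i)) / 4"
proof -
  have fin: "finite I" "finite J"
    using assms finite_subset by auto
  have decomp: "block_sum A (I \<inter> L) (J - L) = (\<Sum>i\<in>I. \<Sum>j\<in>J. A i j * of_bool (i \<in> L \<and> j \<notin> L))" for L
    unfolding block_sum_def using fin
    by (intro sum.mono_neutral_cong_left) (auto intro!: sum.mono_neutral_cong_left)
  have "subset_expect N (1/2) (\<lambda>L. block_sum A (I \<inter> L) (J - L))
      = (\<Sum>i\<in>I. \<Sum>j\<in>J. A i j * subset_expect N (1/2) (\<lambda>L. of_bool (i \<in> L \<and> j \<notin> L)))"
    unfolding decomp using fin by (simp only: subset_expect_sum subset_expect_cmult)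
  also have "\<dots> = (\<Sum>i\<in>I. \<Sum>j\<in>J. A i j / 4 - (if j = i then A i i / 4 else 0))"
  proof (intro sum.cong refl)
    fix i j assume "i \<in> I" "j \<in> J"
    then have "i \<in> N" "j \<in> N"
      using assms by auto
    then show "A i j * subset_expect N (1/2) (\<lambda>L. of_bool (i \<in> L \<and> j \<notin> L))
        = A i j / 4 - (if j = i then A i i / 4 else 0)"
      using assms(1) by (cases "i = j") (simp_all add: subset_expect_const subset_expect_indicator_diff)
  qed
  also have "\<dots> = (block_sum A I J - (\<Sum>i\<in>I \<inter> J. A i i)) / 4"
    using fin by (simp add: block_sum_def sum_subtractf sum_divide_distrib diff_divide_distrib
        sum.inter_filter Int_def if_distrib[of "\<lambda>x. x / 4"] cong: if_cong)
  finally show ?thesis .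
qed

lemma max_block_sum_diag_decouple:
  assumes "finite N" "Q \<subseteq> N"
  shows "max_block_sum A Q Q
    \<le> 4 * subset_expect N (1/2) (\<lambda>L. max_block_sum A (Q \<inter> L) (Q - L)) + (\<Sum>i\<in>Q. \<bar>A i i\<bar>)"
proof -
  have fin: "finite Q"
    using assms finite_subset by auto
  have "block_sum A I J
      \<le> 4 * subset_expect N (1/2) (\<lambda>L. max_block_sum A (Q \<inter> L) (Q - L)) + (\<Sum>i\<in>Q. \<bar>A i i\<bar>)"
    if IJ: "I \<subseteq> Q" "J \<subseteq> Q" for I J
  proof -
    have "block_sum A I J
        = 4 * subset_expect N (1/2) (\<lambda>L. block_sum A (I \<inter> L) (J - L)) + (\<Sum>i\<in>I \<inter> J. A i i)"
      using subset_expect_half_block_sum[OF assms(1) subset_trans[OF IJ(1) assms(2)]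
          subset_trans[OF IJ(2) assms(2)], of A]
      by simp
    moreover have "subset_expect N (1/2) (\<lambda>L. block_sum A (I \<inter> L) (J - L))
        \<le> subset_expect N (1/2) (\<lambda>L. max_block_sum A (Q \<inter> L) (Q - L))"
      using IJ fin by (intro subset_expect_mono) (auto intro!: max_block_sum_ge)
    moreover have "(\<Sum>i\<in>I \<inter> J. A i i) \<le> (\<Sum>i\<in>Q. \<bar>A i i\<bar>)"
      using IJ fin by (intro order.trans[OF sum_mono sum_mono2]) auto
    ultimately show ?thesis
      by linarith
  qed
  then show ?thesis
    using fin by (simp add: max_block_sum_le_iff)
qed

section \<open>The expected cut norm of a random principal submatrix\<close>

lemma subset_expect_max_block_sum_across_le:
  fixes A :: "nat \<Rightarrow> nat \<Rightarrow> real"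
  assumes "0 \<le> p" "p \<le> 1"
  shows "subset_expect {..<n} p (\<lambda>Q. max_block_sum A (Q \<inter> L) (Q - L))
    \<le> p\<^sup>2 * cut_norm {..<n} A + p * sqrt (2 * p) * (2 * (sqrt n * frob_norm n A))"
proof -
  let ?N = "{..<n}"
  have "subset_expect ?N p (\<lambda>Q. max_block_sum A (Q \<inter> L) (Q - L))
      = subset_expect (?N \<inter> L) p (\<lambda>X. subset_expect (?N - L) p (max_block_sum A X))"
    by (simp add: subset_expect_split)
  also have "\<dots> \<le> p\<^sup>2 * max_block_sum A (?N \<inter> L) (?N - L)
      + p * sqrt (2 * p) * ((\<Sum>j\<in>?N - L. sqrt (\<Sum>i\<in>?N \<inter> L. (A i j)\<^sup>2))
        + (\<Sum>i\<in>?N \<inter> L. sqrt (\<Sum>j\<in>?N - L. (A i j)\<^sup>2)))"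
    using assms by (intro subset_expect_max_block_sum_bipartite) auto
  also have "\<dots> \<le> p\<^sup>2 * cut_norm {..<n} A + p * sqrt (2 * p) * (2 * (sqrt n * frob_norm n A))"
  proof -
    have "max_block_sum A (?N \<inter> L) (?N - L) \<le> cut_norm ?N A"
      by (intro max_block_sum_le_cut_norm) auto
    moreover have "(\<Sum>j\<in>?N - L. sqrt (\<Sum>i\<in>?N \<inter> L. (A i j)\<^sup>2))
        + (\<Sum>i\<in>?N \<inter> L. sqrt (\<Sum>j\<in>?N - L. (A i j)\<^sup>2)) \<le> 2 * (sqrt n * frob_norm n A)"
      using sum_row_norms_le_frob_norm[of "?N - L" n "?N \<inter> L" "\<lambda>j i. A i j"]
        sum_row_norms_le_frob_norm[of "?N \<inter> L" n "?N - L" A]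
      unfolding frob_norm_transpose[of n A] by auto
    ultimately show ?thesis
      using assms by (intro add_mono mult_left_mono) auto
  qed
  finally show ?thesis .
qed

lemma subset_expect_max_block_sum_diag_le:
  fixes A :: "nat \<Rightarrow> nat \<Rightarrow> real"
  assumes "0 \<le> p" "p \<le> 1"
  shows "subset_expect {..<n} p (\<lambda>Q. max_block_sum A Q Q)
    \<le> 4 * p\<^sup>2 * cut_norm {..<n} A + 8 * p * sqrt (2 * p) * sqrt n * frob_norm n A
      + p * (\<Sum>i<n. \<bar>A i i\<bar>)"
proof -
  let ?N = "{..<n}"
  let ?c = "p\<^sup>2 * cut_norm ?N A + p * sqrt (2 * p) * (2 * (sqrt n * frob_norm n A))"
  let ?across = "\<lambda>L. subset_expect ?N p (\<lambda>Q. max_block_sum A (Q \<inter> L) (Q - L))"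
  have "subset_expect ?N p (\<lambda>Q. max_block_sum A Q Q)
      \<le> subset_expect ?N p (\<lambda>Q. 4 * subset_expect ?N (1/2) (\<lambda>L. max_block_sum A (Q \<inter> L) (Q - L))
          + (\<Sum>i\<in>Q. \<bar>A i i\<bar>))"
    using assms by (intro subset_expect_mono max_block_sum_diag_decouple) auto
  also have "\<dots> = 4 * subset_expect ?N (1/2) ?across + p * (\<Sum>i<n. \<bar>A i i\<bar>)"
    by (simp add: subset_expect_add subset_expect_cmult subset_expect_sum_elements subset_expect_swap[of ?N p])
  also have "\<dots> \<le> 4 * ?c + p * (\<Sum>i<n. \<bar>A i i\<bar>)"
    using subset_expect_mono[of "1/2" ?N ?across "\<lambda>_. ?c"]
      subset_expect_max_block_sum_across_le[OF assms, of n A]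
    by (simp add: subset_expect_const)
  finally show ?thesis
    by (simp add: algebra_simps)
qed

theorem expectation_cut_norm_random_subset_le:
  fixes A :: "nat \<Rightarrow> nat \<Rightarrow> real"
  assumes "0 \<le> p" "p \<le> 1"
  shows "measure_pmf.expectation (random_subset n p) (\<lambda>Q. cut_norm Q A)
    \<le> 8 * p\<^sup>2 * cut_norm {..<n} A + 16 * p * sqrt (2 * p) * sqrt n * frob_norm n A
      + 2 * p * (\<Sum>i<n. \<bar>A i i\<bar>)"
proof -
  let ?b = "4 * p\<^sup>2 * cut_norm {..<n} A + 8 * p * sqrt (2 * p) * sqrt n * frob_norm n A
    + p * (\<Sum>i<n. \<bar>A i i\<bar>)"
  have "measure_pmf.expectation (random_subset n p) (\<lambda>Q. cut_norm Q A)
      \<le> subset_expect {..<n} p (\<lambda>Q. max_block_sum A Q Q)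
        + subset_expect {..<n} p (\<lambda>Q. max_block_sum (\<lambda>i j. - A i j) Q Q)"
    unfolding expectation_random_subset[OF assms] subset_expect_add[symmetric]
    using assms by (intro subset_expect_mono cut_norm_le_max_block_sum)
      (auto intro: finite_subset[OF _ finite_lessThan])
  also have "\<dots> \<le> ?b + ?b"
    using subset_expect_max_block_sum_diag_le[OF assms, of n A]
      subset_expect_max_block_sum_diag_le[OF assms, of n "\<lambda>i j. - A i j"]
    unfolding cut_norm_uminus frob_norm_uminus abs_minus_cancel by (rule add_mono)
  finally show ?thesis
    by (simp add: algebra_simps)
qed

lemma expectation_cut_norm_random_subset_sample_size:
  fixes A :: "nat \<Rightarrow> nat \<Rightarrow> real"
  assumes q: "0 < q" "q \<le> real n"
    and bounds: "cut_norm {..<n} A \<le> C * (real n)\<^sup>2" "frob_norm n A \<le> F * real n"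
      "\<forall>i<n. \<bar>A i i\<bar> \<le> D"
  shows "measure_pmf.expectation (random_subset n (q / real n)) (\<lambda>Q. cut_norm Q A)
    \<le> 8 * C * q\<^sup>2 + 16 * sqrt 2 * F * (q * sqrt q) + 2 * D * q"
proof -
  define p where "p = q / real n"
  have n: "0 < real n"
    using q by linarith
  have p: "0 \<le> p" "p \<le> 1" and pn: "p * real n = q"
    using q n by (auto simp: p_def)
  have "p\<^sup>2 * cut_norm {..<n} A \<le> p\<^sup>2 * (C * (real n)\<^sup>2)"
    using bounds(1) by (rule mult_left_mono) simp
  also have "\<dots> = C * q\<^sup>2"
    by (simp flip: pn add: power_mult_distrib)
  finally have cut: "p\<^sup>2 * cut_norm {..<n} A \<le> C * q\<^sup>2" .
  have "p * sqrt (2 * p) * sqrt n * frob_norm n A \<le> p * sqrt (2 * p) * sqrt n * (F * real n)"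
    using bounds(2) p by (intro mult_left_mono) auto
  also have "\<dots> = sqrt 2 * F * (q * sqrt q)"
    by (simp flip: pn add: real_sqrt_mult algebra_simps)
  finally have frob: "p * sqrt (2 * p) * sqrt n * frob_norm n A \<le> sqrt 2 * F * (q * sqrt q)" .
  have "p * (\<Sum>i<n. \<bar>A i i\<bar>) \<le> p * (real n * D)"
    using bounds(3) p sum_bounded_above[of "{..<n}" "\<lambda>i. \<bar>A i i\<bar>" D] by (intro mult_left_mono) auto
  then have diag: "p * (\<Sum>i<n. \<bar>A i i\<bar>) \<le> D * q"
    by (simp flip: pn add: algebra_simps)
  show ?thesis
    using expectation_cut_norm_random_subset_le[OF p, of n A] cut frob diag
    unfolding p_def by linarith
qed

lemma sample_size_bounds:
  fixes \<epsilon> K q :: real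
  assumes "0 < \<epsilon>" "0 < K" "K \<le> \<epsilon>\<^sup>2 * q"
  shows "0 < q" "q * sqrt q \<le> \<epsilon> * q\<^sup>2 / sqrt K" "q / \<epsilon> \<le> \<epsilon> * q\<^sup>2 / K"
proof -
  have "0 < \<epsilon>\<^sup>2 * q"
    using assms by linarith
  then show q: "0 < q"
    using assms(1) zero_less_mult_pos[of "\<epsilon>\<^sup>2" q] by simp
  have "sqrt K * (q * sqrt q) \<le> \<epsilon> * sqrt q * (q * sqrt q)"
    using assms q real_sqrt_le_mono[OF assms(3)] by (intro mult_right_mono) (auto simp: real_sqrt_mult)
  also have "\<dots> = \<epsilon> * q\<^sup>2"
    using q by (simp add: power2_eq_square algebra_simps)
  finally show "q * sqrt q \<le> \<epsilon> * q\<^sup>2 / sqrt K"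
    using assms by (simp add: field_simps)
  have "K * (q / \<epsilon>) \<le> \<epsilon>\<^sup>2 * q * (q / \<epsilon>)"
    using assms q by (intro mult_right_mono) auto
  also have "\<dots> = \<epsilon> * q\<^sup>2"
    using assms by (simp add: power2_eq_square field_simps)
  finally show "q / \<epsilon> \<le> \<epsilon> * q\<^sup>2 / K"
    using assms by (simp add: field_simps)
qed

theorem corollary1p3:
  fixes K1 K2 K3 K4 :: real
  assumes "K1 > 0" "K2 > 0" "K3 > 0" "K4 > 0"
  shows "\<exists>K>0. \<forall>(\<epsilon>::real) (n::nat) (A::nat \<Rightarrow> nat \<Rightarrow> real) (q::real).
     0 < \<epsilon> \<and> \<epsilon> \<le> 1 \<and> K1 * \<epsilon> powi (-2) \<le> q \<and> q \<le> real n \<and>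
     cut_norm {..<n} A \<le> K2 * \<epsilon> * (real n)^2 \<and>
     frob_norm n A \<le> K3 * real n \<and>
     (\<forall>i<n. \<forall>j<n. \<bar>A i j\<bar> \<le> K4 / \<epsilon>)
     \<longrightarrow> measure_pmf.expectation (random_subset n (q / real n)) (\<lambda>Q. cut_norm Q A)
         \<le> K * \<epsilon> * q^2"
proof (intro exI[of _ "8 * K2 + 16 * sqrt 2 * K3 / sqrt K1 + 2 * K4 / K1"] conjI allI impI)
  show "0 < 8 * K2 + 16 * sqrt 2 * K3 / sqrt K1 + 2 * K4 / K1"
    using assms by (intro add_pos_pos) auto
  fix \<epsilon> :: real and n :: nat and A :: "nat \<Rightarrow> nat \<Rightarrow> real" and q :: real
  assume H: "0 < \<epsilon> \<and> \<epsilon> \<le> 1 \<and> K1 * \<epsilon> powi (-2) \<le> q \<and> q \<le> real n \<and>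
     cut_norm {..<n} A \<le> K2 * \<epsilon> * (real n)^2 \<and> frob_norm n A \<le> K3 * real n \<and>
     (\<forall>i<n. \<forall>j<n. \<bar>A i j\<bar> \<le> K4 / \<epsilon>)"
  then have "K1 / \<epsilon>\<^sup>2 \<le> q"
    by (simp add: power_int_minus divide_inverse)
  then have "K1 \<le> \<epsilon>\<^sup>2 * q"
    using H by (simp add: divide_le_eq mult.commute)
  then have sample: "0 < q" "q * sqrt q \<le> \<epsilon> * q\<^sup>2 / sqrt K1" "q / \<epsilon> \<le> \<epsilon> * q\<^sup>2 / K1"
    using H assms(1) sample_size_bounds[of \<epsilon> K1 q] by simp_all
  then have "measure_pmf.expectation (random_subset n (q / real n)) (\<lambda>Q. cut_norm Q A)
      \<le> 8 * (K2 * \<epsilon>) * q\<^sup>2 + 16 * sqrt 2 * K3 * (q * sqrt q) + 2 * K4 * (q / \<epsilon>)"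
    using H expectation_cut_norm_random_subset_sample_size[of q n A "K2 * \<epsilon>" K3 "K4 / \<epsilon>"]
    by auto
  also have "\<dots> \<le> 8 * K2 * \<epsilon> * q\<^sup>2 + 16 * sqrt 2 * K3 * (\<epsilon> * q\<^sup>2 / sqrt K1) + 2 * K4 * (\<epsilon> * q\<^sup>2 / K1)"
    using sample assms by (intro add_mono mult_left_mono order.refl) auto
  also have "\<dots> = (8 * K2 + 16 * sqrt 2 * K3 / sqrt K1 + 2 * K4 / K1) * \<epsilon> * q\<^sup>2"
    by (simp add: field_simps)
  finally show "measure_pmf.expectation (random_subset n (q / real n)) (\<lambda>Q. cut_norm Q A)
      \<le> (8 * K2 + 16 * sqrt 2 * K3 / sqrt K1 + 2 * K4 / K1) * \<epsilon> * q\<^sup>2" .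
qed

end
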